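(* Every finitely generated group with infinitely many ends is not presentable by a product.
   Context: An infinite group $\Gamma$ is not presentable by a product if for every homomorphism $\varphi\colon \Gamma_1\times\Gamma_2\to\Gamma$ whose image has finite index in $\Gamma$, at least one of $\varphi(\Gamma_1)$, $\varphi(\Gamma_2)$ is finite. The ends of a finitely generated group are the ends of a Cayley graph with respect to a finite generating set. *)

theory Defs
  imports "HOL-Algebra.Algebra"
begin

definition fin_gen_group :: "('a, 'm) monoid_scheme \<Rightarrow> bool" where
  "fin_gen_group G \<longleftrightarrow> group G \<and>
     (\<exists>S. finite S \<and> S \<subseteq> carrier G \<and> generate G S = carrier G)"

definition cayley_adj :: "('a, 'm) monoid_scheme \<Rightarrow> 'a set \<Rightarrow> 'a \<Rightarrow> 'a \<Rightarrow> bool" where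
  "cayley_adj G S g h \<longleftrightarrow> g \<in> carrier G \<and> h \<in> carrier G \<and>
     (\<exists>s\<in>S. h = g \<otimes>\<^bsub>G\<^esub> s \<or> g = h \<otimes>\<^bsub>G\<^esub> s)"

definition cayley_ray :: "('a, 'm) monoid_scheme \<Rightarrow> 'a set \<Rightarrow> (nat \<Rightarrow> 'a) \<Rightarrow> bool" where
  "cayley_ray G S r \<longleftrightarrow> inj r \<and> (\<forall>n. cayley_adj G S (r n) (r (Suc n)))"

definition conn_avoiding :: "('a, 'm) monoid_scheme \<Rightarrow> 'a set \<Rightarrow> 'a set \<Rightarrow> 'a \<Rightarrow> 'a \<Rightarrow> bool" where
  "conn_avoiding G S K x y \<longleftrightarrow> x \<in> carrier G - K \<and> y \<in> carrier G - K \<and>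
     (\<lambda>a b. cayley_adj G S a b \<and> a \<notin> K \<and> b \<notin> K)\<^sup>*\<^sup>* x y"

definition ray_equiv :: "('a, 'm) monoid_scheme \<Rightarrow> 'a set \<Rightarrow> ((nat \<Rightarrow> 'a) \<times> (nat \<Rightarrow> 'a)) set" where
  "ray_equiv G S = {(r1, r2). cayley_ray G S r1 \<and> cayley_ray G S r2 \<and>
     (\<forall>K. finite K \<longrightarrow> (\<exists>m n. \<forall>i\<ge>m. \<forall>j\<ge>n. conn_avoiding G S K (r1 i) (r2 j)))}"

definition cayley_ends :: "('a, 'm) monoid_scheme \<Rightarrow> 'a set \<Rightarrow> (nat \<Rightarrow> 'a) set set" where
  "cayley_ends G S = {r. cayley_ray G S r} // ray_equiv G S"

text \<open>G has infinitely many ends: for a finite generating set S, the Cayley graph has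
  infinitely many ends (this number does not depend on S).\<close>
definition infinitely_many_ends :: "('a, 'm) monoid_scheme \<Rightarrow> bool" where
  "infinitely_many_ends G \<longleftrightarrow>
     (\<exists>S. finite S \<and> S \<subseteq> carrier G \<and> generate G S = carrier G \<and> infinite (cayley_ends G S))"

definition no_product_presentation ::
  "('a, 'm) monoid_scheme \<Rightarrow> ('b, 'n) monoid_scheme \<Rightarrow> ('c, 'k) monoid_scheme \<Rightarrow> bool" where
  "no_product_presentation G H1 H2 \<longleftrightarrow>
     (\<forall>\<phi> \<in> hom (H1 \<times>\<times> H2) G.
        finite (rcosets\<^bsub>G\<^esub> (\<phi> ` carrier (H1 \<times>\<times> H2))) \<longrightarrow>
        finite (\<phi> ` (carrier H1 \<times> {\<one>\<^bsub>H2\<^esub>})) \<or> finite (\<phi> ` ({\<one>\<^bsub>H1\<^esub>} \<times> carrier H2)))"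

end

theory Submission
  imports Defs
begin

text \<open>
  Let \<open>\<phi> : H\<^sub>1 \<times> H\<^sub>2 \<rightarrow> G\<close> have image \<open>H\<close> of finite index, and suppose both
  \<open>A = \<phi>(H\<^sub>1 \<times> 1)\<close> and \<open>B = \<phi>(1 \<times> H\<^sub>2)\<close> are infinite; they commute elementwise
  and \<open>H = A B\<close>.

  Right multiplication by a fixed element moves vertices a bounded distance, so it keeps all
  but finitely many vertices in their component of the complement of a finite set \<open>K\<close>.
  Call \<open>c\<close> deep (\<open>deep_translation_connected\<close>) if for every finite \<open>K\<close> and far out along every ray there is a vertex
  \<open>u\<close> in the same component as \<open>c u\<close>. Infinitely many deep elements leave at most two
  ends: take a connected finite \<open>K \<ni> 1\<close> separating three ends and a deep \<open>c\<close> with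
  \<open>c K \<inter> K = \<emptyset>\<close>; the connected sets \<open>c K\<close> and \<open>c\<^sup>-\<^sup>1 K\<close> each meet only one component,
  so one of the three components avoids both, and \<open>c\<close> then maps it onto itself, which is
  impossible at its boundary in \<open>K\<close>.

  A ray meets some coset \<open>H t\<close> infinitely often, so a
  component far out contains infinitely many points of \<open>H\<close>. If \<open>A \<inter> B\<close> is infinite, its
  elements centralise \<open>H\<close>, and \<open>c x = x c\<close> on these points makes \<open>c\<close> deep. Otherwise, by
  Schreier's lemma \<open>H\<close> is finitely generated, so one factor, say \<open>B\<close>, contains an infinite
  finitely generated subgroup \<open>\<langle>\<Sigma>\<rangle>\<close>; a component far out then meets some coset \<open>a B\<close>
  infinitely often, and on \<open>a B\<close> left multiplication by \<open>c \<in> A\<close> agrees with right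
  multiplication by \<open>a\<^sup>-\<^sup>1 c a\<close>, so every element of \<open>A\<close> is deep.
\<close>

section \<open>Products of commuting subgroups and subgroups of finite index\<close>

context group
begin

lemma inv_m_cancel_left: "x \<in> carrier G \<Longrightarrow> y \<in> carrier G \<Longrightarrow> inv x \<otimes> (x \<otimes> y) = y"
  by (simp add: m_assoc[symmetric])

lemma m_inv_cancel_left: "x \<in> carrier G \<Longrightarrow> y \<in> carrier G \<Longrightarrow> x \<otimes> (inv x \<otimes> y) = y"
  by (simp add: m_assoc[symmetric])

lemma set_mult_memI: "a \<in> U \<Longrightarrow> b \<in> V \<Longrightarrow> a \<otimes> b \<in> U <#> V"
  unfolding set_mult_def by blast

lemma l_coset_memI: "b \<in> B \<Longrightarrow> a \<otimes> b \<in> a <# B"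
  unfolding l_coset_def by blast

lemma Int_commuting_subgroups_centralise:
  assumes A: "subgroup A G" and B: "subgroup B G"
    and comm: "\<And>a b. a \<in> A \<Longrightarrow> b \<in> B \<Longrightarrow> a \<otimes> b = b \<otimes> a"
    and c: "c \<in> A \<inter> B" and h: "h \<in> A <#> B"
  shows "c \<otimes> h = h \<otimes> c"
proof -
  obtain a b where ab: "a \<in> A" "b \<in> B" "h = a \<otimes> b"
    using h unfolding set_mult_def by blast
  have cs: "a \<in> carrier G" "b \<in> carrier G" "c \<in> carrier G"
    using ab c subgroup.mem_carrier[OF A] subgroup.mem_carrier[OF B] by auto
  have "c \<otimes> h = (c \<otimes> a) \<otimes> b" using ab(3) cs by (simp add: m_assoc)
  also have "\<dots> = (a \<otimes> c) \<otimes> b" using comm[of a c] ab(1) c by simp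
  also have "\<dots> = a \<otimes> (c \<otimes> b)" using cs by (simp add: m_assoc)
  also have "\<dots> = a \<otimes> (b \<otimes> c)" using comm[of c b] ab(2) c by simp
  also have "\<dots> = h \<otimes> c" using ab(3) cs by (simp add: m_assoc)
  finally show ?thesis .
qed

lemma finite_left_factors:
  assumes A: "subgroup A G" and B: "subgroup B G" and AB: "finite (A \<inter> B)" and F: "finite F"
  shows "finite {a \<in> A. \<exists>b\<in>B. a \<otimes> b \<in> F}"
proof -
  interpret A: subgroup A G by fact
  interpret B: subgroup B G by fact
  have fibre: "{a \<in> A. \<exists>b\<in>B. a \<otimes> b = f} \<subseteq> (\<otimes>) a1 ` (A \<inter> B)"
    if ab1: "a1 \<in> A" "b1 \<in> B" "a1 \<otimes> b1 = f" for a1 b1 f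
  proof
    fix a assume "a \<in> {a \<in> A. \<exists>b\<in>B. a \<otimes> b = f}"
    then obtain b where ab: "a \<in> A" "b \<in> B" "a \<otimes> b = f" by blast
    have c: "a \<in> carrier G" "b \<in> carrier G" "a1 \<in> carrier G" "b1 \<in> carrier G"
      using ab ab1 by auto
    have "inv a1 \<otimes> a = inv a1 \<otimes> (a \<otimes> b) \<otimes> inv b" using c by (simp add: m_assoc)
    also have "\<dots> = inv a1 \<otimes> (a1 \<otimes> b1) \<otimes> inv b" using ab(3) ab1(3) by simp
    also have "\<dots> = b1 \<otimes> inv b" using c by (simp add: m_assoc[symmetric])
    finally have "inv a1 \<otimes> a = b1 \<otimes> inv b" .
    moreover have "b1 \<otimes> inv b \<in> B" using ab(2) ab1(2) by simp
    moreover have "inv a1 \<otimes> a \<in> A" using ab(1) ab1(1) by simp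
    ultimately have "inv a1 \<otimes> a \<in> A \<inter> B" by simp
    moreover have "a = a1 \<otimes> (inv a1 \<otimes> a)" using c by (simp add: m_assoc[symmetric])
    ultimately show "a \<in> (\<otimes>) a1 ` (A \<inter> B)" by blast
  qed
  have "finite {a \<in> A. \<exists>b\<in>B. a \<otimes> b = f}" for f
  proof (cases "\<exists>a1\<in>A. \<exists>b1\<in>B. a1 \<otimes> b1 = f")
    case True
    then obtain a1 b1 where "a1 \<in> A" "b1 \<in> B" "a1 \<otimes> b1 = f" by blast
    from fibre[OF this] show ?thesis using AB by (rule finite_subset[OF _ finite_imageI])
  next
    case False
    then have "{a \<in> A. \<exists>b\<in>B. a \<otimes> b = f} = {}" by blast
    then show ?thesis by (metis finite.emptyI)
  qed
  moreover have "{a \<in> A. \<exists>b\<in>B. a \<otimes> b \<in> F} = (\<Union>f\<in>F. {a \<in> A. \<exists>b\<in>B. a \<otimes> b = f})" by blast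
  ultimately show ?thesis using F by simp
qed

lemma infinite_Int_l_coset:
  assumes Y: "infinite Y" "Y \<subseteq> A <#> B" and F: "finite F"
    and spread: "\<And>a b. a \<in> A \<Longrightarrow> a \<notin> F \<Longrightarrow> b \<in> B \<Longrightarrow> a \<otimes> b \<in> Y \<Longrightarrow> infinite (Y \<inter> (a <# B))"
  shows "\<exists>a\<in>A. infinite (Y \<inter> (a <# B))"
proof (rule ccontr)
  assume fin: "\<not> (\<exists>a\<in>A. infinite (Y \<inter> (a <# B)))"
  have "Y \<subseteq> (\<Union>a\<in>A \<inter> F. Y \<inter> (a <# B))"
  proof
    fix y assume y: "y \<in> Y"
    then obtain a b where ab: "a \<in> A" "b \<in> B" "y = a \<otimes> b"
      using Y(2) unfolding set_mult_def by blast
    have "a \<in> F"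
    proof (rule ccontr)
      assume "a \<notin> F"
      then have "infinite (Y \<inter> (a <# B))" using spread[OF ab(1) _ ab(2)] y ab(3) by blast
      then show False using fin ab(1) by blast
    qed
    moreover have "y \<in> a <# B" using ab unfolding l_coset_def by blast
    ultimately show "y \<in> (\<Union>a\<in>A \<inter> F. Y \<inter> (a <# B))" using ab(1) y by blast
  qed
  moreover have "finite (\<Union>a\<in>A \<inter> F. Y \<inter> (a <# B))" using F fin by (intro finite_UN_I) auto
  ultimately show False using Y(1) finite_subset by blast
qed

definition coset_rep :: "'a set \<Rightarrow> 'a \<Rightarrow> 'a" where
  "coset_rep H g = (SOME t. t \<in> H #> g)"

lemma coset_rep_in_coset:
  assumes H: "subgroup H G" and g: "g \<in> carrier G"
  shows "coset_rep H g \<in> carrier G" and "g \<otimes> inv (coset_rep H g) \<in> H"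
proof -
  interpret H: subgroup H G by fact
  have "g \<in> H #> g" using rcos_self[OF g H] .
  then have rep: "coset_rep H g \<in> H #> g" unfolding coset_rep_def by (rule someI)
  then show c: "coset_rep H g \<in> carrier G" using H.elemrcos_carrier[OF is_group g] by blast
  have "inv (coset_rep H g \<otimes> inv g) \<in> H" using H.rcos_module_imp[OF is_group g rep] by simp
  then show "g \<otimes> inv (coset_rep H g) \<in> H" using c g by (simp add: inv_mult_group)
qed

lemma coset_rep_eq:
  assumes H: "subgroup H G" and x: "x \<in> carrier G" and y: "y \<in> carrier G"
    and "x \<otimes> inv y \<in> H"
  shows "coset_rep H x = coset_rep H y"
proof -
  have "x \<in> H #> y" using subgroup.rcos_module_rev[OF H is_group y x assms(4)] .
  then have "H #> y = H #> x" using repr_independence[OF _ y H] by blast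
  then show ?thesis unfolding coset_rep_def by simp
qed

lemma finite_coset_reps:
  assumes H: "subgroup H G" and fin: "finite (rcosets H)"
  shows "finite (coset_rep H ` carrier G)"
proof -
  have "coset_rep H ` carrier G \<subseteq> (\<lambda>C. SOME t. t \<in> C) ` (rcosets H)"
    unfolding coset_rep_def using rcosetsI[OF subgroup.subset[OF H]] by blast
  then show ?thesis using fin finite_subset by blast
qed

definition schreier_generators :: "'a set \<Rightarrow> 'a set \<Rightarrow> 'a set" where
  "schreier_generators H S =
     (\<lambda>(t, x). t \<otimes> x \<otimes> inv (coset_rep H (t \<otimes> x))) `
       (coset_rep H ` carrier G \<times> (S \<union> m_inv G ` S \<union> {\<one>})) \<union> {coset_rep H \<one>}"

lemma coset_rep_one_mem:
  assumes "subgroup H G"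
  shows "coset_rep H \<one> \<in> H"
proof -
  have "inv (coset_rep H \<one>) \<in> H"
    using coset_rep_in_coset[OF assms one_closed] by simp
  from subgroup.m_inv_closed[OF assms this] show ?thesis
    using coset_rep_in_coset(1)[OF assms one_closed] by simp
qed

lemma schreier_generators_subset:
  assumes H: "subgroup H G" and S: "S \<subseteq> carrier G"
  shows "schreier_generators H S \<subseteq> H"
proof -
  have "t \<otimes> x \<otimes> inv (coset_rep H (t \<otimes> x)) \<in> H"
    if "t \<in> coset_rep H ` carrier G" "x \<in> S \<union> m_inv G ` S \<union> {\<one>}" for t x
  proof -
    have "t \<otimes> x \<in> carrier G" using that S coset_rep_in_coset(1)[OF H] by auto
    then show ?thesis by (rule coset_rep_in_coset(2)[OF H])
  qed
  then show ?thesis unfolding schreier_generators_def using coset_rep_one_mem[OF H] by auto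
qed

lemma finite_schreier_generators:
  assumes "subgroup H G" "finite (rcosets H)" "finite S"
  shows "finite (schreier_generators H S)"
  unfolding schreier_generators_def using finite_coset_reps[OF assms(1,2)] assms(3) by simp

text \<open>The coset representative \<open>r\<close> is a right transversal, so \<open>t g r(t g)\<^sup>-\<^sup>1\<close> telescopes along
  a word for \<open>g\<close> into a product of Schreier generators.\<close>
lemma transversal_mem_generate_schreier:
  assumes H: "subgroup H G" and S: "S \<subseteq> carrier G"
    and g: "g \<in> generate G S" and t: "t \<in> coset_rep H ` carrier G"
  shows "t \<otimes> g \<otimes> inv (coset_rep H (t \<otimes> g)) \<in> generate G (schreier_generators H S)"
proof -
  let ?r = "coset_rep H" and ?X = "S \<union> m_inv G ` S \<union> {\<one>}"
  have base: "t \<otimes> x \<otimes> inv (?r (t \<otimes> x)) \<in> generate G (schreier_generators H S)"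
    if "t \<in> ?r ` carrier G" "x \<in> ?X" for t x
  proof (rule generate.incl)
    show "t \<otimes> x \<otimes> inv (?r (t \<otimes> x)) \<in> schreier_generators H S"
      unfolding schreier_generators_def using that by (intro UnI1 image_eqI[of _ _ "(t, x)"]) auto
  qed
  from g t show ?thesis
  proof (induction arbitrary: t rule: generate.induct)
    case one
    then show ?case by (rule base) simp
  next
    case (incl s)
    then show ?case by (intro base) auto
  next
    case (inv s)
    then show ?case by (intro base) auto
  next
    case (eng g1 g2)
    have g: "g1 \<in> carrier G" "g2 \<in> carrier G"
      using eng.hyps generate_in_carrier[OF S] by auto
    have t: "t \<in> carrier G" using eng.prems coset_rep_in_coset(1)[OF H] by blast
    let ?s = "?r (t \<otimes> g1)"
    have s: "?s \<in> ?r ` carrier G" "?s \<in> carrier G" using t g coset_rep_in_coset(1)[OF H] by auto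
    have "(t \<otimes> g1 \<otimes> g2) \<otimes> inv (?s \<otimes> g2) = t \<otimes> g1 \<otimes> inv ?s"
      using t g s(2) by (simp add: inv_mult_group m_assoc inv_m_cancel_left m_inv_cancel_left)
    then have "?r (t \<otimes> g1 \<otimes> g2) = ?r (?s \<otimes> g2)"
      using coset_rep_in_coset(2)[OF H, of "t \<otimes> g1"] t g s(2) by (intro coset_rep_eq[OF H]) auto
    moreover have "(t \<otimes> g1 \<otimes> inv ?s) \<otimes> (?s \<otimes> g2 \<otimes> inv (?r (?s \<otimes> g2)))
        = t \<otimes> (g1 \<otimes> g2) \<otimes> inv (?r (?s \<otimes> g2))"
      using t g s(2) coset_rep_in_coset(1)[OF H, of "?s \<otimes> g2"]
      by (simp add: m_assoc inv_m_cancel_left m_inv_cancel_left)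
    ultimately show ?case
      using generate.eng[OF eng.IH(1)[OF eng.prems] eng.IH(2)[OF s(1)]] t g by (simp add: m_assoc)
  qed
qed

lemma subgroup_subset_generate_schreier:
  assumes H: "subgroup H G" and S: "S \<subseteq> carrier G" "generate G S = carrier G"
  shows "H \<subseteq> generate G (schreier_generators H S)"
proof
  fix h assume h: "h \<in> H"
  let ?t = "coset_rep H \<one>" and ?gen = "generate G (schreier_generators H S)"
  have t: "?t \<in> carrier G" "?t \<in> H" "?t \<in> coset_rep H ` carrier G"
    using coset_rep_in_coset(1)[OF H one_closed] coset_rep_one_mem[OF H] by auto
  have hc: "h \<in> carrier G" using h subgroup.mem_carrier[OF H] by blast
  have "?t \<otimes> h \<otimes> inv \<one> \<in> H" using t(1,2) h hc subgroup.m_closed[OF H] by simp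
  then have "coset_rep H (?t \<otimes> h) = ?t" using t(1) hc by (intro coset_rep_eq[OF H]) auto
  moreover have "h \<in> generate G S" using hc S(2) by simp
  ultimately have conj: "?t \<otimes> h \<otimes> inv ?t \<in> ?gen"
    using transversal_mem_generate_schreier[OF H S(1) _ t(3)] by metis
  have "?t \<in> schreier_generators H S" unfolding schreier_generators_def by simp
  then have "?t \<in> ?gen" by (rule generate.incl)
  moreover have sub: "subgroup ?gen G"
    using generate_is_subgroup schreier_generators_subset[OF H S(1)] subgroup.subset[OF H] by blast
  ultimately have "inv ?t \<otimes> (?t \<otimes> h \<otimes> inv ?t) \<otimes> ?t \<in> ?gen"
    using conj subgroup.m_closed[OF sub] subgroup.m_inv_closed[OF sub] by blast
  moreover have "inv ?t \<otimes> (?t \<otimes> h \<otimes> inv ?t) \<otimes> ?t = h"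
    using t(1) hc by (simp add: m_assoc inv_m_cancel_left)
  ultimately show "h \<in> ?gen" by simp
qed

lemma generate_subset_commuting_product:
  assumes A: "subgroup A G" and B: "subgroup B G"
    and comm: "\<And>a b. a \<in> A \<Longrightarrow> b \<in> B \<Longrightarrow> a \<otimes> b = b \<otimes> a"
    and \<Sigma>: "finite \<Sigma>" "\<Sigma> \<subseteq> A <#> B"
  obtains SA SB where "finite SA" "SA \<subseteq> A" "finite SB" "SB \<subseteq> B"
    and "generate G \<Sigma> \<subseteq> generate G SA <#> generate G SB"
proof -
  interpret A: subgroup A G by fact
  interpret B: subgroup B G by fact
  have "\<forall>\<sigma>\<in>\<Sigma>. \<exists>a. a \<in> A \<and> (\<exists>b. b \<in> B \<and> a \<otimes> b = \<sigma>)"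
    using \<Sigma>(2) unfolding set_mult_def by blast
  from bchoice[OF this] obtain \<alpha> where "\<forall>\<sigma>\<in>\<Sigma>. \<alpha> \<sigma> \<in> A \<and> (\<exists>b. b \<in> B \<and> \<alpha> \<sigma> \<otimes> b = \<sigma>)"
    by blast
  then have "\<forall>\<sigma>\<in>\<Sigma>. \<alpha> \<sigma> \<in> A" and "\<forall>\<sigma>\<in>\<Sigma>. \<exists>b. b \<in> B \<and> \<alpha> \<sigma> \<otimes> b = \<sigma>" by blast+
  from this(1) bchoice[OF this(2)] obtain \<beta>
    where ab: "\<And>\<sigma>. \<sigma> \<in> \<Sigma> \<Longrightarrow> \<alpha> \<sigma> \<in> A \<and> \<beta> \<sigma> \<in> B \<and> \<alpha> \<sigma> \<otimes> \<beta> \<sigma> = \<sigma>"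
    by blast
  let ?A' = "generate G (\<alpha> ` \<Sigma>)" and ?B' = "generate G (\<beta> ` \<Sigma>)"
  have "\<alpha> ` \<Sigma> \<subseteq> A" "\<beta> ` \<Sigma> \<subseteq> B" using ab by auto
  then have A'A: "?A' \<subseteq> A" and B'B: "?B' \<subseteq> B"
    using generate_subgroup_incl[OF _ A] generate_subgroup_incl[OF _ B] by auto
  have "x \<in> ?A' <#> ?B'" if "x \<in> generate G \<Sigma>" for x
    using that
  proof (induction rule: generate.induct)
    case one
    show ?case using set_mult_memI[OF generate.one[of G] generate.one[of G]] by simp
  next
    case (incl \<sigma>)
    have "\<alpha> \<sigma> \<in> ?A'" "\<beta> \<sigma> \<in> ?B'" using incl by (auto intro: generate.incl)
    from set_mult_memI[OF this] show ?case using ab[OF incl] by simp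
  next
    case (inv \<sigma>)
    have 1: "\<alpha> \<sigma> \<in> A" "\<beta> \<sigma> \<in> B" "\<alpha> \<sigma> \<otimes> \<beta> \<sigma> = \<sigma>" using ab[OF inv] by auto
    have "inv \<sigma> = inv (\<alpha> \<sigma> \<otimes> \<beta> \<sigma>)" using 1(3) by simp
    also have "\<dots> = inv (\<beta> \<sigma>) \<otimes> inv (\<alpha> \<sigma>)" using 1(1,2) by (simp add: inv_mult_group)
    also have "\<dots> = inv (\<alpha> \<sigma>) \<otimes> inv (\<beta> \<sigma>)" using comm[of "inv (\<alpha> \<sigma>)" "inv (\<beta> \<sigma>)"] 1(1,2) by simp
    moreover have "inv (\<alpha> \<sigma>) \<in> ?A'" "inv (\<beta> \<sigma>) \<in> ?B'" using inv by (auto intro: generate.inv)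
    ultimately show ?case using set_mult_memI by simp
  next
    case (eng x y)
    obtain a1 b1 a2 b2 where 1: "a1 \<in> ?A'" "b1 \<in> ?B'" "x = a1 \<otimes> b1"
      and 2: "a2 \<in> ?A'" "b2 \<in> ?B'" "y = a2 \<otimes> b2"
      using eng.IH unfolding set_mult_def by blast
    have c: "a1 \<in> carrier G" "b1 \<in> carrier G" "a2 \<in> carrier G" "b2 \<in> carrier G"
      using 1 2 A'A B'B by auto
    have "a2 \<in> A" "b1 \<in> B" using 1(2) 2(1) A'A B'B by auto
    from comm[OF this] have "b1 \<otimes> a2 = a2 \<otimes> b1" by simp
    have "x \<otimes> y = a1 \<otimes> (b1 \<otimes> a2) \<otimes> b2" using 1(3) 2(3) c by (simp add: m_assoc)
    also have "\<dots> = a1 \<otimes> (a2 \<otimes> b1) \<otimes> b2" using \<open>b1 \<otimes> a2 = a2 \<otimes> b1\<close> by simp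
    also have "\<dots> = (a1 \<otimes> a2) \<otimes> (b1 \<otimes> b2)" using c by (simp add: m_assoc)
    finally show ?case
      using set_mult_memI[OF generate.eng[OF 1(1) 2(1)] generate.eng[OF 1(2) 2(2)]] by simp
  qed
  then show ?thesis
    using that[of "\<alpha> ` \<Sigma>" "\<beta> ` \<Sigma>"] \<Sigma>(1) \<open>\<alpha> ` \<Sigma> \<subseteq> A\<close> \<open>\<beta> ` \<Sigma> \<subseteq> B\<close> by blast
qed

lemma set_mult_commuting_subset:
  assumes "\<And>a b. a \<in> A \<Longrightarrow> b \<in> B \<Longrightarrow> a \<otimes> b = b \<otimes> a"
  shows "A <#> B \<subseteq> B <#> A"
  using assms unfolding set_mult_def by blast

lemma commuting_factor_infinite_finitely_generated:
  assumes S: "finite S" "S \<subseteq> carrier G" "generate G S = carrier G"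
    and A: "subgroup A G" and B: "subgroup B G"
    and comm: "\<And>a b. a \<in> A \<Longrightarrow> b \<in> B \<Longrightarrow> a \<otimes> b = b \<otimes> a"
    and H: "subgroup H G" "finite (rcosets H)" "H \<subseteq> A <#> B" "A \<subseteq> H"
    and infinite: "infinite A"
  obtains \<Sigma> where "finite \<Sigma>" "\<Sigma> \<subseteq> A" "infinite (generate G \<Sigma>)"
    | \<Sigma> where "finite \<Sigma>" "\<Sigma> \<subseteq> B" "infinite (generate G \<Sigma>)"
proof -
  let ?\<Sigma> = "schreier_generators H S"
  have \<Sigma>: "finite ?\<Sigma>" "?\<Sigma> \<subseteq> A <#> B" "H \<subseteq> generate G ?\<Sigma>"
    using finite_schreier_generators[OF H(1,2) S(1)] schreier_generators_subset[OF H(1) S(2)]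
      subgroup_subset_generate_schreier[OF H(1) S(2,3)] H(3) by auto
  obtain SA SB where SA: "finite SA" "SA \<subseteq> A" and SB: "finite SB" "SB \<subseteq> B"
    and gen: "generate G ?\<Sigma> \<subseteq> generate G SA <#> generate G SB"
    by (rule generate_subset_commuting_product[OF A B comm \<Sigma>(1,2)])
  have "A \<subseteq> generate G SA <#> generate G SB" using H(4) \<Sigma>(3) gen by blast
  moreover have "finite (generate G SA <#> generate G SB)"
    if "finite (generate G SA)" "finite (generate G SB)"
    using that unfolding set_mult_def by simp
  ultimately have "infinite (generate G SA) \<or> infinite (generate G SB)"
    using infinite finite_subset by blast
  then show ?thesis using that SA SB by blast
qed

end

section \<open>Connectivity in the Cayley graph\<close>

lemma rtranclp_map:
  assumes "R\<^sup>*\<^sup>* a b" and "\<And>x y. R x y \<Longrightarrow> Q (f x) (f y)"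
  shows "Q\<^sup>*\<^sup>* (f a) (f b)"
  using assms(1) by induction (auto intro: rtranclp.rtrancl_into_rtrancl assms(2))

lemma rtranclp_crossing_edge:
  assumes "R\<^sup>*\<^sup>* a b" "P a" "\<not> P b"
  shows "\<exists>x y. R x y \<and> P x \<and> \<not> P y"
  using assms by induction auto

lemma pigeonhole_three:
  assumes "\<And>v w. P v \<Longrightarrow> P w \<Longrightarrow> R v w" "\<And>v w. Q v \<Longrightarrow> Q w \<Longrightarrow> R v w"
    and "\<not> R v1 v2" "\<not> R v1 v3" "\<not> R v2 v3"
  shows "\<exists>v\<in>{v1, v2, v3}. \<not> P v \<and> \<not> Q v"
  using assms by blast

locale cayley_graph = group G for G (structure) +
  fixes S
  assumes generators_closed: "S \<subseteq> carrier G"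
    and generate_eq: "generate G S = carrier G"
begin

abbreviation "adj \<equiv> cayley_adj G S"
abbreviation "conn \<equiv> conn_avoiding G S"

lemma adj_sym: "adj x y = adj y x"
  unfolding cayley_adj_def by blast

lemma adj_carrier: "adj x y \<Longrightarrow> x \<in> carrier G \<and> y \<in> carrier G"
  unfolding cayley_adj_def by blast

lemma adj_right_mult:
  assumes "x \<in> carrier G" "s \<in> S"
  shows "adj x (x \<otimes> s)" "adj x (x \<otimes> inv s)"
  using assms generators_closed unfolding cayley_adj_def
  by (auto intro!: bexI[of _ s] simp: m_assoc)

lemma adj_left_mult:
  assumes "c \<in> carrier G" "adj x y"
  shows "adj (c \<otimes> x) (c \<otimes> y)"
  using assms generators_closed unfolding cayley_adj_def by (auto simp: m_assoc subset_iff)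

lemma conn_carrier: "conn K x y \<Longrightarrow> x \<in> carrier G \<and> y \<in> carrier G \<and> x \<notin> K \<and> y \<notin> K"
  unfolding conn_avoiding_def by blast

lemma conn_refl: "x \<in> carrier G \<Longrightarrow> x \<notin> K \<Longrightarrow> conn K x x"
  unfolding conn_avoiding_def by blast

lemma conn_step: "adj x y \<Longrightarrow> x \<notin> K \<Longrightarrow> y \<notin> K \<Longrightarrow> conn K x y"
  unfolding conn_avoiding_def using adj_carrier by auto

lemma conn_trans: "conn K x y \<Longrightarrow> conn K y z \<Longrightarrow> conn K x z"
  unfolding conn_avoiding_def by (auto intro: rtranclp_trans)

lemma conn_sym: "conn K x y \<Longrightarrow> conn K y x"
proof -
  let ?R = "\<lambda>a b. adj a b \<and> a \<notin> K \<and> b \<notin> K"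
  have sym: "?R\<inverse>\<inverse> = ?R" using adj_sym by blast
  assume "conn K x y"
  then have "?R\<^sup>*\<^sup>* x y" "x \<in> carrier G - K" "y \<in> carrier G - K"
    unfolding conn_avoiding_def by blast+
  then show "conn K y x"
    using rtranclp_converseI[of ?R x y] unfolding sym conn_avoiding_def by blast
qed

lemma conn_antimono:
  assumes "K \<inter> carrier G \<subseteq> K'" and "conn K' x y"
  shows "conn K x y"
proof -
  have "(\<lambda>a b. adj a b \<and> a \<notin> K' \<and> b \<notin> K')\<^sup>*\<^sup>* x y"
    using assms(2) unfolding conn_avoiding_def by blast
  then have "(\<lambda>a b. adj a b \<and> a \<notin> K \<and> b \<notin> K)\<^sup>*\<^sup>* x y"
    by (rule mono_rtranclp[rule_format, rotated]) (use assms(1) adj_carrier in blast)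
  then show ?thesis using assms unfolding conn_avoiding_def by blast
qed

lemma conn_avoiding_component:
  assumes "conn K v y" and avoid: "\<And>z. conn K v z \<Longrightarrow> z \<notin> K'"
  shows "conn K' v y"
proof -
  let ?R = "\<lambda>a b. adj a b \<and> a \<notin> K \<and> b \<notin> K"
  have v: "v \<in> carrier G" "v \<notin> K" using assms(1) conn_carrier by auto
  have "?R\<^sup>*\<^sup>* v y \<Longrightarrow> conn K' v y" for y
  proof (induction rule: rtranclp_induct)
    case base
    then show ?case using avoid v conn_refl by auto
  next
    case (step y z)
    have "conn K v y" "conn K v z"
      using step(1,2) rtranclp.rtrancl_into_rtrancl[OF step(1,2)] v adj_carrier
      unfolding conn_avoiding_def by blast+
    then have "conn K' y z" using step(2) avoid conn_step by blast
    then show ?case using step(3) conn_trans by blast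
  qed
  then show ?thesis using assms(1) unfolding conn_avoiding_def by blast
qed

lemma conn_left_mult:
  assumes c: "c \<in> carrier G" and K: "K \<subseteq> carrier G" and "conn K x y"
  shows "conn ((\<otimes>) c ` K) (c \<otimes> x) (c \<otimes> y)"
proof -
  have notin: "a \<in> carrier G \<Longrightarrow> a \<notin> K \<Longrightarrow> c \<otimes> a \<notin> (\<otimes>) c ` K" for a
    using c K by (auto simp: subset_iff)
  let ?R = "\<lambda>a b. adj a b \<and> a \<notin> K \<and> b \<notin> K"
  let ?R' = "\<lambda>a b. adj a b \<and> a \<notin> (\<otimes>) c ` K \<and> b \<notin> (\<otimes>) c ` K"
  have "?R' (c \<otimes> a) (c \<otimes> b)" if "?R a b" for a b
    using that adj_left_mult[OF c] notin adj_carrier by blast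
  then have "?R'\<^sup>*\<^sup>* (c \<otimes> x) (c \<otimes> y)"
    using assms(3) unfolding conn_avoiding_def by (blast intro: rtranclp_map)
  then show ?thesis using assms(3) c notin unfolding conn_avoiding_def by auto
qed

lemma right_mult_notin:
  assumes "w \<in> carrier G" "u \<in> carrier G" "u \<notin> (\<lambda>k. k \<otimes> inv w) ` K"
  shows "u \<otimes> w \<notin> K"
proof
  assume "u \<otimes> w \<in> K"
  moreover have "u = u \<otimes> w \<otimes> inv w" using assms by (simp add: m_assoc)
  ultimately show False using assms(3) by blast
qed

lemma finite_not_conn_right_mult:
  assumes K: "finite K" and w: "w \<in> carrier G"
  shows "finite {u \<in> carrier G. \<not> conn K u (u \<otimes> w)}"
proof -
  have edge: "finite {u \<in> carrier G. \<not> conn K u (u \<otimes> s)}"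
    if s: "s \<in> carrier G" "\<And>u. u \<in> carrier G \<Longrightarrow> adj u (u \<otimes> s)" for s
  proof (rule finite_subset)
    show "{u \<in> carrier G. \<not> conn K u (u \<otimes> s)} \<subseteq> K \<union> (\<lambda>k. k \<otimes> inv s) ` K"
    proof (rule subsetI, rule ccontr)
      fix u assume u: "u \<in> {u \<in> carrier G. \<not> conn K u (u \<otimes> s)}"
        and "u \<notin> K \<union> (\<lambda>k. k \<otimes> inv s) ` K"
      then have "u \<notin> K" "u \<otimes> s \<notin> K" using right_mult_notin[OF s(1)] by auto
      then show False using u conn_step[OF s(2)] by auto
    qed
  qed (use K in simp)
  have "w \<in> generate G S" using w generate_eq by simp
  then show ?thesis
  proof (induction rule: generate.induct)
    case one
    have "{u \<in> carrier G. \<not> conn K u (u \<otimes> \<one>)} \<subseteq> K" using conn_refl by force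
    then show ?case using K finite_subset by blast
  next
    case (incl s)
    then show ?case using edge[of s] adj_right_mult(1)[of _ s] generators_closed by auto
  next
    case (inv s)
    then show ?case using edge[of "inv s"] adj_right_mult(2)[of _ s] generators_closed by auto
  next
    case (eng w1 w2)
    have w12: "w1 \<in> carrier G" "w2 \<in> carrier G" using eng.hyps generate_eq by auto
    let ?E = "\<lambda>w. {u \<in> carrier G. \<not> conn K u (u \<otimes> w)}"
    have "?E (w1 \<otimes> w2) \<subseteq> ?E w1 \<union> (\<lambda>f. f \<otimes> inv w1) ` ?E w2"
    proof
      fix u assume u: "u \<in> ?E (w1 \<otimes> w2)"
      show "u \<in> ?E w1 \<union> (\<lambda>f. f \<otimes> inv w1) ` ?E w2"
      proof (rule ccontr)
        assume "u \<notin> ?E w1 \<union> (\<lambda>f. f \<otimes> inv w1) ` ?E w2"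
        then have "conn K u (u \<otimes> w1)" "conn K (u \<otimes> w1) (u \<otimes> w1 \<otimes> w2)"
          using u w12 right_mult_notin[of w1 u "?E w2"] by auto
        then show False using u w12 conn_trans by (simp add: m_assoc)
      qed
    qed
    then show ?case using eng.IH finite_subset by blast
  qed
qed

definition induced_connected :: "'a set \<Rightarrow> bool" where
  "induced_connected Q \<longleftrightarrow>
     Q \<subseteq> carrier G \<and> (\<forall>x\<in>Q. \<forall>y\<in>Q. (\<lambda>a b. adj a b \<and> a \<in> Q \<and> b \<in> Q)\<^sup>*\<^sup>* x y)"

lemma induced_connected_left_mult:
  assumes Q: "induced_connected Q" and c: "c \<in> carrier G"
  shows "induced_connected ((\<otimes>) c ` Q)"
proof -
  let ?R = "\<lambda>Q a b. adj a b \<and> a \<in> Q \<and> b \<in> Q"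
  have step: "?R ((\<otimes>) c ` Q) (c \<otimes> a) (c \<otimes> b)" if "?R Q a b" for a b
    using that adj_left_mult[OF c] by blast
  have "(?R ((\<otimes>) c ` Q))\<^sup>*\<^sup>* (c \<otimes> x) (c \<otimes> y)" if "x \<in> Q" "y \<in> Q" for x y
    using Q that step unfolding induced_connected_def by (blast intro: rtranclp_map)
  then show ?thesis using Q c unfolding induced_connected_def by auto
qed

lemma induced_connected_Un:
  assumes "induced_connected Q1" "induced_connected Q2" "z \<in> Q1" "z \<in> Q2"
  shows "induced_connected (Q1 \<union> Q2)"
proof -
  let ?R = "\<lambda>Q a b. adj a b \<and> a \<in> Q \<and> b \<in> Q"
  have mono: "(?R Q')\<^sup>*\<^sup>* x y" if "(?R Q)\<^sup>*\<^sup>* x y" "Q \<subseteq> Q'" for Q Q' x y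
    using that(1) by (rule mono_rtranclp[rule_format, rotated]) (use that(2) in blast)
  have to_z: "(?R (Q1 \<union> Q2))\<^sup>*\<^sup>* x z \<and> (?R (Q1 \<union> Q2))\<^sup>*\<^sup>* z x" if "x \<in> Q1 \<union> Q2" for x
  proof (cases "x \<in> Q1")
    case True
    then show ?thesis
      using assms(1,3) mono[of Q1 _ _ "Q1 \<union> Q2"] unfolding induced_connected_def by blast
  next
    case False
    then show ?thesis
      using that assms(2,4) mono[of Q2 _ _ "Q1 \<union> Q2"] unfolding induced_connected_def by blast
  qed
  have "(?R (Q1 \<union> Q2))\<^sup>*\<^sup>* x y" if "x \<in> Q1 \<union> Q2" "y \<in> Q1 \<union> Q2" for x y
    using to_z[OF that(1)] to_z[OF that(2)] by (blast intro: rtranclp_trans)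
  then show ?thesis using assms(1,2) unfolding induced_connected_def by blast
qed

lemma induced_connected_singleton: "x \<in> carrier G \<Longrightarrow> induced_connected {x}"
  unfolding induced_connected_def by auto

lemma induced_connected_edge:
  assumes "adj x y"
  shows "induced_connected {x, y}"
proof -
  let ?R = "\<lambda>a b. adj a b \<and> a \<in> {x, y} \<and> b \<in> {x, y}"
  have "?R x y" "?R y x" using assms adj_sym by auto
  then have "?R\<^sup>*\<^sup>* x y" "?R\<^sup>*\<^sup>* y x" by auto
  then show ?thesis using assms adj_carrier unfolding induced_connected_def by auto
qed

lemma finite_induced_connected_path:
  assumes "g \<in> carrier G"
  obtains Q where "finite Q" "induced_connected Q" "\<one> \<in> Q" "g \<in> Q"
proof -
  have "g \<in> generate G S" using generate_eq assms by simp
  then have "\<exists>Q. finite Q \<and> induced_connected Q \<and> \<one> \<in> Q \<and> g \<in> Q"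
  proof (induction rule: generate.induct)
    case one
    have "induced_connected {\<one>}" by (simp add: induced_connected_singleton)
    then show ?case by (intro exI[of _ "{\<one>}"]) simp
  next
    case (incl s)
    then have "s \<in> carrier G" using generators_closed by blast
    then have "adj \<one> s" using adj_right_mult(1)[OF one_closed incl] by simp
    then have "induced_connected {\<one>, s}" by (rule induced_connected_edge)
    then show ?case by (intro exI[of _ "{\<one>, s}"]) simp
  next
    case (inv s)
    then have "s \<in> carrier G" using generators_closed by blast
    then have "adj \<one> (inv s)" using adj_right_mult(2)[OF one_closed inv] by simp
    then have "induced_connected {\<one>, inv s}" by (rule induced_connected_edge)
    then show ?case by (intro exI[of _ "{\<one>, inv s}"]) simp
  next
    case (eng g1 g2)
    obtain Q1 where Q1: "finite Q1" "induced_connected Q1" "\<one> \<in> Q1" "g1 \<in> Q1"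
      using eng.IH by blast
    obtain Q2 where Q2: "finite Q2" "induced_connected Q2" "\<one> \<in> Q2" "g2 \<in> Q2"
      using eng.IH by blast
    have g1: "g1 \<in> carrier G" using eng.hyps generate_eq by auto
    have "induced_connected ((\<otimes>) g1 ` Q2)" "g1 \<in> (\<otimes>) g1 ` Q2"
      using induced_connected_left_mult Q2 g1 by (auto intro: image_eqI[of _ _ \<one>])
    then have "induced_connected (Q1 \<union> (\<otimes>) g1 ` Q2)" using induced_connected_Un Q1 by blast
    then show ?case using Q1 Q2 by (intro exI[of _ "Q1 \<union> (\<otimes>) g1 ` Q2"]) auto
  qed
  then show ?thesis using that by blast
qed

lemma finite_induced_connected_superset:
  assumes "finite K" "K \<subseteq> carrier G"
  obtains K' where "finite K'" "induced_connected K'" "\<one> \<in> K'" "K \<subseteq> K'"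
proof -
  from assms have "\<exists>K'. finite K' \<and> induced_connected K' \<and> \<one> \<in> K' \<and> K \<subseteq> K'"
  proof (induction K rule: finite_induct)
    case empty
    then show ?case using induced_connected_singleton[of \<one>] by blast
  next
    case (insert k K)
    obtain K' where K': "finite K'" "induced_connected K'" "\<one> \<in> K'" "K \<subseteq> K'"
      using insert by auto
    obtain Q where Q: "finite Q" "induced_connected Q" "\<one> \<in> Q" "k \<in> Q"
      using finite_induced_connected_path[of k] insert.prems by auto
    have "induced_connected (K' \<union> Q)" using induced_connected_Un K' Q by blast
    then show ?case using K' Q by (intro exI[of _ "K' \<union> Q"]) auto
  qed
  then show ?thesis using that by blast
qed

lemma adj_rtranclp_one:
  assumes "g \<in> carrier G"
  shows "adj\<^sup>*\<^sup>* g \<one>"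
proof -
  obtain Q where "induced_connected Q" "\<one> \<in> Q" "g \<in> Q"
    using finite_induced_connected_path assms by blast
  then have "(\<lambda>a b. adj a b \<and> a \<in> Q \<and> b \<in> Q)\<^sup>*\<^sup>* g \<one>"
    unfolding induced_connected_def by blast
  then show ?thesis by (rule mono_rtranclp[rule_format, rotated]) blast
qed

lemma induced_connected_conn:
  assumes "induced_connected M" "M \<inter> K = {}" "x \<in> M" "y \<in> M"
  shows "conn K x y"
proof -
  have "(\<lambda>a b. adj a b \<and> a \<in> M \<and> b \<in> M)\<^sup>*\<^sup>* x y"
    using assms unfolding induced_connected_def by blast
  then have "(\<lambda>a b. adj a b \<and> a \<notin> K \<and> b \<notin> K)\<^sup>*\<^sup>* x y"
    by (rule mono_rtranclp[rule_format, rotated]) (use assms(2) in blast)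
  then show ?thesis using assms unfolding conn_avoiding_def induced_connected_def by auto
qed

lemma ray_carrier: "cayley_ray G S r \<Longrightarrow> r n \<in> carrier G"
  unfolding cayley_ray_def cayley_adj_def by blast

lemma finite_ray_preimage: "cayley_ray G S r \<Longrightarrow> finite F \<Longrightarrow> finite {n. r n \<in> F}"
  unfolding cayley_ray_def by (metis finite_vimageI vimage_def)

lemma ray_tail:
  assumes r: "cayley_ray G S r" and K: "finite K"
  obtains m where "\<forall>n\<ge>m. r n \<notin> K \<and> conn K (r m) (r n)"
proof -
  obtain m where m: "\<forall>n\<in>{n. r n \<in> K}. n < m"
    using finite_ray_preimage[OF r K] finite_nat_set_iff_bounded by blast
  then have notin: "n \<ge> m \<Longrightarrow> r n \<notin> K" for n by force
  have "n \<ge> m \<Longrightarrow> conn K (r m) (r n)" for n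
  proof (induction n rule: dec_induct)
    case base
    then show ?case using conn_refl ray_carrier[OF r] notin by auto
  next
    case (step n)
    have "conn K (r n) (r (Suc n))"
      using r step notin unfolding cayley_ray_def by (intro conn_step) auto
    then show ?case using step conn_trans by blast
  qed
  then show ?thesis using notin that by blast
qed

lemma ray_equiv_sym:
  assumes "(r1, r2) \<in> ray_equiv G S"
  shows "(r2, r1) \<in> ray_equiv G S"
proof -
  have "\<exists>m n. \<forall>i\<ge>m. \<forall>j\<ge>n. conn K (r2 i) (r1 j)" if K: "finite K" for K
  proof -
    obtain m n where "\<forall>i\<ge>m. \<forall>j\<ge>n. conn K (r1 i) (r2 j)"
      using assms K unfolding ray_equiv_def by blast
    then have "\<forall>i\<ge>n. \<forall>j\<ge>m. conn K (r2 i) (r1 j)" using conn_sym by blast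
    then show ?thesis by blast
  qed
  then show ?thesis using assms unfolding ray_equiv_def by blast
qed

lemma ray_equiv_trans:
  assumes "(r1, r2) \<in> ray_equiv G S" "(r2, r3) \<in> ray_equiv G S"
  shows "(r1, r3) \<in> ray_equiv G S"
proof -
  have rays: "cayley_ray G S r1" "cayley_ray G S r3" using assms unfolding ray_equiv_def by auto
  have "\<exists>m n. \<forall>i\<ge>m. \<forall>j\<ge>n. conn K (r1 i) (r3 j)" if K: "finite K" for K
  proof -
    obtain m1 n1 where 1: "\<forall>i\<ge>m1. \<forall>j\<ge>n1. conn K (r1 i) (r2 j)"
      using assms(1) K unfolding ray_equiv_def by blast
    obtain m2 n2 where 2: "\<forall>i\<ge>m2. \<forall>j\<ge>n2. conn K (r2 i) (r3 j)"
      using assms(2) K unfolding ray_equiv_def by blast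
    have "\<forall>i\<ge>m1. \<forall>j\<ge>n2. conn K (r1 i) (r3 j)"
    proof (intro allI impI)
      fix i j assume "i \<ge> m1" "j \<ge> n2"
      then show "conn K (r1 i) (r3 j)"
        using 1[rule_format, of i "max n1 m2"] 2[rule_format, of "max n1 m2" j] conn_trans by auto
    qed
    then show ?thesis by blast
  qed
  then show ?thesis using rays unfolding ray_equiv_def by blast
qed

lemma ray_equiv_Image_eq:
  assumes "(r1, r2) \<in> ray_equiv G S"
  shows "ray_equiv G S `` {r1} = ray_equiv G S `` {r2}"
proof -
  have "(r1, r) \<in> ray_equiv G S \<longleftrightarrow> (r2, r) \<in> ray_equiv G S" for r
    using ray_equiv_trans[OF ray_equiv_sym[OF assms]] ray_equiv_trans[OF assms] by blast
  then show ?thesis by auto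
qed

definition separates_tails :: "'a set \<Rightarrow> (nat \<Rightarrow> 'a) \<Rightarrow> (nat \<Rightarrow> 'a) \<Rightarrow> bool" where
  "separates_tails K r1 r2 \<longleftrightarrow>
     (\<forall>K' m1 m2. K \<inter> carrier G \<subseteq> K' \<longrightarrow> (\<forall>n\<ge>m1. conn K' (r1 m1) (r1 n)) \<longrightarrow>
        (\<forall>n\<ge>m2. conn K' (r2 m2) (r2 n)) \<longrightarrow> \<not> conn K' (r1 m1) (r2 m2))"

lemma inequivalent_rays_separated:
  assumes "cayley_ray G S r1" "cayley_ray G S r2" "(r1, r2) \<notin> ray_equiv G S"
  obtains K where "finite K" "separates_tails K r1 r2"
proof -
  obtain K where K: "finite K" "\<forall>m n. \<exists>i\<ge>m. \<exists>j\<ge>n. \<not> conn K (r1 i) (r2 j)"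
    using assms unfolding ray_equiv_def by auto
  have "\<not> conn K' (r1 m1) (r2 m2)"
    if KK': "K \<inter> carrier G \<subseteq> K'" and tails: "\<forall>n\<ge>m1. conn K' (r1 m1) (r1 n)"
      "\<forall>n\<ge>m2. conn K' (r2 m2) (r2 n)" for K' m1 m2
  proof
    assume "conn K' (r1 m1) (r2 m2)"
    moreover obtain i j where ij: "i \<ge> m1" "j \<ge> m2" "\<not> conn K (r1 i) (r2 j)"
      using K(2) by blast
    moreover have "conn K' (r1 i) (r1 m1)" "conn K' (r2 m2) (r2 j)"
      using tails ij(1,2) conn_sym by blast+
    ultimately have "conn K' (r1 i) (r2 j)" using conn_trans by blast
    then show False using ij(3) conn_antimono[OF KK'] by blast
  qed
  then have "separates_tails K r1 r2" unfolding separates_tails_def by blast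
  then show ?thesis using K(1) that by blast
qed

lemma three_inequivalent_rays:
  assumes "infinite (cayley_ends G S)"
  obtains r1 r2 r3 where "cayley_ray G S r1" "cayley_ray G S r2" "cayley_ray G S r3"
    and "(r1, r2) \<notin> ray_equiv G S" "(r1, r3) \<notin> ray_equiv G S" "(r2, r3) \<notin> ray_equiv G S"
proof -
  let ?R = "ray_equiv G S"
  obtain F where "F \<subseteq> cayley_ends G S" "card F = 3"
    using assms infinite_arbitrarily_large by blast
  then obtain E1 E2 E3 where E: "{E1, E2, E3} \<subseteq> cayley_ends G S"
    "E1 \<noteq> E2" "E2 \<noteq> E3" "E1 \<noteq> E3"
    using card_3_iff by metis
  have "\<exists>r. cayley_ray G S r \<and> E = ?R `` {r}" if "E \<in> cayley_ends G S" for E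
    using that unfolding cayley_ends_def by (auto elim!: quotientE)
  then obtain r1 r2 r3 where r: "cayley_ray G S r1" "cayley_ray G S r2" "cayley_ray G S r3"
    and "E1 = ?R `` {r1}" "E2 = ?R `` {r2}" "E3 = ?R `` {r3}"
    using E(1) by (metis insert_subset)
  then have "(r1, r2) \<notin> ?R" and "(r1, r3) \<notin> ?R" and "(r2, r3) \<notin> ?R"
    using ray_equiv_Image_eq E(2-4) by metis+
  then show ?thesis using that r by blast
qed

lemma three_separated_components:
  assumes "infinite (cayley_ends G S)"
  obtains K v1 v2 v3 where "finite K" "induced_connected K" "\<one> \<in> K"
    and "\<not> conn K v1 v2" "\<not> conn K v1 v3" "\<not> conn K v2 v3"
    and "\<forall>v\<in>{v1, v2, v3}. \<exists>r m. cayley_ray G S r \<and> (\<forall>n\<ge>m. conn K v (r n))"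
proof -
  obtain r1 r2 r3 where r: "cayley_ray G S r1" "cayley_ray G S r2" "cayley_ray G S r3"
    and ne: "(r1, r2) \<notin> ray_equiv G S" "(r1, r3) \<notin> ray_equiv G S" "(r2, r3) \<notin> ray_equiv G S"
    using three_inequivalent_rays[OF assms] by blast
  obtain K12 K13 K23 where K12: "finite K12" "separates_tails K12 r1 r2"
    and K13: "finite K13" "separates_tails K13 r1 r3"
    and K23: "finite K23" "separates_tails K23 r2 r3"
    using inequivalent_rays_separated[OF r(1,2) ne(1)] inequivalent_rays_separated[OF r(1,3) ne(2)]
      inequivalent_rays_separated[OF r(2,3) ne(3)] by metis
  then obtain K where K: "finite K" "induced_connected K" "\<one> \<in> K"
    "(K12 \<union> K13 \<union> K23) \<inter> carrier G \<subseteq> K"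
    using finite_induced_connected_superset[of "(K12 \<union> K13 \<union> K23) \<inter> carrier G"] by blast
  obtain m1 m2 m3 where m: "\<forall>n\<ge>m1. conn K (r1 m1) (r1 n)" "\<forall>n\<ge>m2. conn K (r2 m2) (r2 n)"
    "\<forall>n\<ge>m3. conn K (r3 m3) (r3 n)"
    using ray_tail[OF _ K(1)] r by metis
  have "\<not> conn K (r1 m1) (r2 m2)" "\<not> conn K (r1 m1) (r3 m3)" "\<not> conn K (r2 m2) (r3 m3)"
    using K12(2)[unfolded separates_tails_def, rule_format, of K m1 m2]
      K13(2)[unfolded separates_tails_def, rule_format, of K m1 m3]
      K23(2)[unfolded separates_tails_def, rule_format, of K m2 m3] K(4) m by blast+
  moreover have "\<forall>v\<in>{r1 m1, r2 m2, r3 m3}. \<exists>r m. cayley_ray G S r \<and> (\<forall>n\<ge>m. conn K v (r n))"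
  proof
    fix v assume v: "v \<in> {r1 m1, r2 m2, r3 m3}"
    consider "v = r1 m1" | "v = r2 m2" | "v = r3 m3" using v by blast
    then show "\<exists>r m. cayley_ray G S r \<and> (\<forall>n\<ge>m. conn K v (r n))"
    proof cases
      case 1
      show ?thesis unfolding 1 by (intro exI[of _ r1] exI[of _ m1] conjI r(1) m(1))
    next
      case 2
      show ?thesis unfolding 2 by (intro exI[of _ r2] exI[of _ m2] conjI r(2) m(2))
    next
      case 3
      show ?thesis unfolding 3 by (intro exI[of _ r3] exI[of _ m3] conjI r(3) m(3))
    qed
  qed
  ultimately show ?thesis by (rule that[OF K(1-3)])
qed

text \<open>Missing \<open>c K\<close>, the component of \<open>v\<close> is also a component of the complement of \<open>c K\<close>;
  translating it back by \<open>c\<^sup>-\<^sup>1\<close> gives a component of the complement of \<open>K\<close> that contains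
  \<open>u\<close>, hence the component of \<open>v\<close> itself.\<close>
lemma conn_inv_left_mult:
  assumes c: "c \<in> carrier G" and K: "K \<subseteq> carrier G"
    and u: "conn K v u" "conn K v (c \<otimes> u)"
    and avoid: "\<And>z. conn K v z \<Longrightarrow> z \<notin> (\<otimes>) c ` K"
    and y: "conn K v y"
  shows "conn K v (inv c \<otimes> y)"
proof -
  have v: "v \<in> carrier G" using u conn_carrier by auto
  have "conn ((\<otimes>) c ` K) (c \<otimes> v) (c \<otimes> u)" using conn_left_mult[OF c K u(1)] .
  moreover have "conn ((\<otimes>) c ` K) v (c \<otimes> u)" "conn ((\<otimes>) c ` K) v y"
    using conn_avoiding_component[OF u(2) avoid] conn_avoiding_component[OF y avoid] by auto
  ultimately have "conn ((\<otimes>) c ` K) (c \<otimes> v) y" using conn_sym conn_trans by blast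
  from conn_left_mult[OF inv_closed[OF c] _ this]
  have "conn ((\<otimes>) (inv c) ` (\<otimes>) c ` K) (inv c \<otimes> (c \<otimes> v)) (inv c \<otimes> y)"
    using c K by blast
  moreover have "(\<otimes>) (inv c) ` (\<otimes>) c ` K = K"
    using c K by (force simp: image_image m_assoc[symmetric])
  ultimately show ?thesis using c v by (simp add: m_assoc[symmetric])
qed

text \<open>The component is mapped onto itself by \<open>c\<close>. It has a boundary vertex \<open>z \<in> K\<close>
  (as \<open>\<one> \<in> K\<close>), and then \<open>c\<^sup>-\<^sup>1 z\<close> is a boundary vertex in \<open>K\<close> as well.\<close>
lemma component_not_left_mult_invariant:
  assumes K: "induced_connected K" "\<one> \<in> K" and c: "c \<in> carrier G"
    and disjoint: "(\<otimes>) c ` K \<inter> K = {}"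
    and u: "conn K v u" "conn K v (c \<otimes> u)"
    and avoid: "\<And>z. conn K v z \<Longrightarrow> z \<notin> (\<otimes>) c ` K"
    and avoid_inv: "\<And>z. conn K v z \<Longrightarrow> z \<notin> (\<otimes>) (inv c) ` K"
  shows False
proof -
  have Kc: "K \<subseteq> carrier G" using K unfolding induced_connected_def by auto
  have v: "v \<in> carrier G" using u conn_carrier by auto
  have ic: "inv c \<in> carrier G" using c by simp
  have backward: "conn K v (inv c \<otimes> y)" if "conn K v y" for y
    using conn_inv_left_mult[OF c Kc u avoid that] .
  have forward: "conn K v (c \<otimes> y)" if "conn K v y" for y
  proof -
    have "u \<in> carrier G" using u conn_carrier by blast
    then have "conn K v (inv c \<otimes> (c \<otimes> u))" using u c by (simp add: m_assoc[symmetric])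
    from conn_inv_left_mult[OF ic Kc u(2) this avoid_inv that]
    show ?thesis using c by simp
  qed
  have boundary: "z \<in> K" if "conn K v x" "adj x z" "\<not> conn K v z" for x z
  proof (rule ccontr)
    assume "z \<notin> K"
    then have "conn K x z" using that(1,2) conn_carrier conn_step by blast
    then show False using that(1,3) conn_trans by blast
  qed
  have "conn K v v" using u(1) conn_carrier conn_refl by blast
  moreover have "\<not> conn K v \<one>" using K conn_carrier by blast
  ultimately obtain x z where xz: "adj x z" "conn K v x" "\<not> conn K v z"
    using rtranclp_crossing_edge[OF adj_rtranclp_one[OF v]] by blast
  have z: "z \<in> carrier G" using xz adj_carrier by auto
  have "\<not> conn K v (inv c \<otimes> z)"
  proof
    assume "conn K v (inv c \<otimes> z)"
    then have "conn K v (c \<otimes> (inv c \<otimes> z))" by (rule forward)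
    then show False using xz(3) c z by (simp add: m_assoc[symmetric])
  qed
  then have "inv c \<otimes> z \<in> K"
    using boundary[OF backward[OF xz(2)] adj_left_mult[OF ic xz(1)]] by blast
  moreover have "c \<otimes> (inv c \<otimes> z) = z" using c z by (simp add: m_assoc[symmetric])
  ultimately have "z \<in> (\<otimes>) c ` K" by (metis image_eqI)
  then show False using disjoint boundary[OF xz(2,1,3)] by blast
qed

lemma left_mult_disjoint:
  assumes K: "K \<subseteq> carrier G" and c: "c \<in> carrier G"
    and "c \<notin> (\<lambda>(k, k'). k \<otimes> inv k') ` (K \<times> K)"
  shows "(\<otimes>) c ` K \<inter> K = {}" "(\<otimes>) (inv c) ` K \<inter> K = {}"
proof -
  have *: "c \<otimes> k' \<noteq> k" if "k \<in> K" "k' \<in> K" for k k'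
  proof
    assume "c \<otimes> k' = k"
    then have "c = k \<otimes> inv k'" using that K c by (auto simp: m_assoc)
    then have "c \<in> (\<lambda>(k, k'). k \<otimes> inv k') ` (K \<times> K)"
      using that by (intro image_eqI[of _ _ "(k, k')"]) auto
    then show False using assms(3) by blast
  qed
  then show "(\<otimes>) c ` K \<inter> K = {}" by blast
  have "inv c \<otimes> k' \<noteq> k" if "k \<in> K" "k' \<in> K" for k k'
  proof
    assume "inv c \<otimes> k' = k"
    then have "c \<otimes> k = k'" using that K c by (auto simp: m_assoc[symmetric])
    then show False using * that by blast
  qed
  then show "(\<otimes>) (inv c) ` K \<inter> K = {}" by blast
qed

lemma conn_through_connected:
  assumes "induced_connected M" "M \<inter> K = {}"
    and "conn K v y" "y \<in> M" "conn K w y'" "y' \<in> M"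
  shows "conn K v w"
proof -
  have "conn K y y'" using induced_connected_conn[OF assms(1,2,4,6)] .
  then show ?thesis by (rule conn_trans[OF assms(3) conn_trans[OF _ conn_sym[OF assms(5)]]])
qed

subsection \<open>Elements translating deep points within their component\<close>

definition deep_translation_connected :: "'a \<Rightarrow> bool" where
  "deep_translation_connected c \<longleftrightarrow>
     (\<forall>K r m. finite K \<longrightarrow> cayley_ray G S r \<longrightarrow>
        (\<exists>n\<ge>m. \<exists>u. conn K (r n) u \<and> conn K u (c \<otimes> u)))"

text \<open>The translates \<open>c K\<close> and \<open>c\<^sup>-\<^sup>1 K\<close> are connected and miss \<open>K\<close>, so each of them meets at
  most one of three distinct components.\<close>
lemma component_avoiding_translates:
  assumes K: "induced_connected K" and c: "c \<in> carrier G"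
    and disjoint: "(\<otimes>) c ` K \<inter> K = {}" "(\<otimes>) (inv c) ` K \<inter> K = {}"
    and sep: "\<not> conn K v1 v2" "\<not> conn K v1 v3" "\<not> conn K v2 v3"
  obtains v where "v \<in> {v1, v2, v3}"
    and "\<forall>z. conn K v z \<longrightarrow> z \<notin> (\<otimes>) c ` K" "\<forall>z. conn K v z \<longrightarrow> z \<notin> (\<otimes>) (inv c) ` K"
proof -
  have meets_once: "conn K v w"
    if c': "c' \<in> {c, inv c}" and meets: "\<exists>y. conn K v y \<and> y \<in> (\<otimes>) c' ` K"
      "\<exists>y. conn K w y \<and> y \<in> (\<otimes>) c' ` K" for c' v w
  proof -
    obtain y y' where y: "conn K v y" "y \<in> (\<otimes>) c' ` K" "conn K w y'" "y' \<in> (\<otimes>) c' ` K"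
      using meets by blast
    show ?thesis
    proof (rule conn_through_connected[OF _ _ y])
      show "induced_connected ((\<otimes>) c' ` K)"
        using c' c induced_connected_left_mult[OF K] by auto
      show "(\<otimes>) c' ` K \<inter> K = {}" using c' disjoint by auto
    qed
  qed
  have "\<exists>v\<in>{v1, v2, v3}. \<not> (\<exists>y. conn K v y \<and> y \<in> (\<otimes>) c ` K) \<and>
      \<not> (\<exists>y. conn K v y \<and> y \<in> (\<otimes>) (inv c) ` K)"
    by (rule pigeonhole_three[OF meets_once[OF insertI1] meets_once[OF insertI2[OF singletonI]]
          sep])
  then obtain v where v: "v \<in> {v1, v2, v3}" and "\<not> (\<exists>y. conn K v y \<and> y \<in> (\<otimes>) c ` K)"
    and "\<not> (\<exists>y. conn K v y \<and> y \<in> (\<otimes>) (inv c) ` K)"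
    by blast
  then have "\<forall>z. conn K v z \<longrightarrow> z \<notin> (\<otimes>) c ` K" "\<forall>z. conn K v z \<longrightarrow> z \<notin> (\<otimes>) (inv c) ` K"
    by blast+
  with v show ?thesis by (rule that)
qed

lemma finite_ends_if_deep_translations:
  assumes Z: "Z \<subseteq> carrier G" "infinite Z"
    and deep: "\<And>c. c \<in> Z \<Longrightarrow> deep_translation_connected c"
  shows "finite (cayley_ends G S)"
proof (rule ccontr)
  assume "infinite (cayley_ends G S)"
  then obtain K v1 v2 v3 where K: "finite K" "induced_connected K" "\<one> \<in> K"
    and sep: "\<not> conn K v1 v2" "\<not> conn K v1 v3" "\<not> conn K v2 v3"
    and rays: "\<forall>v\<in>{v1, v2, v3}. \<exists>r m. cayley_ray G S r \<and> (\<forall>n\<ge>m. conn K v (r n))"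
    by (rule three_separated_components)
  have Kc: "K \<subseteq> carrier G" using K unfolding induced_connected_def by auto
  have "infinite (Z - (\<lambda>(k, k'). k \<otimes> inv k') ` (K \<times> K))"
    using Z K by (intro Diff_infinite_finite) auto
  then obtain c where c: "c \<in> Z" "c \<notin> (\<lambda>(k, k'). k \<otimes> inv k') ` (K \<times> K)"
    using infinite_imp_nonempty by blast
  have cc: "c \<in> carrier G" using c Z by auto
  note disjoint = left_mult_disjoint[OF Kc cc c(2)]
  obtain v where v: "v \<in> {v1, v2, v3}"
    and avoid: "\<forall>z. conn K v z \<longrightarrow> z \<notin> (\<otimes>) c ` K"
    and avoid_inv: "\<forall>z. conn K v z \<longrightarrow> z \<notin> (\<otimes>) (inv c) ` K"
    by (rule component_avoiding_translates[OF K(2) cc disjoint sep])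
  obtain r m where r: "cayley_ray G S r" "\<forall>n\<ge>m. conn K v (r n)" using rays v by blast
  obtain n u where "n \<ge> m" "conn K (r n) u" "conn K u (c \<otimes> u)"
    using deep[OF c(1)] K(1) r(1) unfolding deep_translation_connected_def by blast
  then have "conn K v u" "conn K v (c \<otimes> u)" using r(2) conn_trans by blast+
  then show False
    using component_not_left_mult_invariant[OF K(2,3) cc disjoint(1)] avoid[rule_format]
      avoid_inv[rule_format] by blast
qed

lemma ray_infinitely_often_in_coset:
  assumes H: "subgroup H G" "finite (rcosets H)" and r: "cayley_ray G S r"
  obtains t where "t \<in> carrier G" "infinite {n. r n \<otimes> inv t \<in> H}"
proof -
  have "(\<lambda>n. H #> r n) ` UNIV \<subseteq> rcosets H"
    by (rule image_subsetI) (rule rcosetsI[OF subgroup.subset[OF H(1)] ray_carrier[OF r]])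
  then have "finite ((\<lambda>n. H #> r n) ` UNIV)" using H(2) by (rule finite_subset)
  from pigeonhole_infinite[OF infinite_UNIV_nat this]
  obtain n0 where n0: "infinite {n. H #> r n = H #> r n0}" by auto
  have "r n \<otimes> inv (r n0) \<in> H" if "H #> r n = H #> r n0" for n
  proof -
    have "r n \<in> H #> r n0" using rcos_self[OF ray_carrier[OF r, of n] H(1)] that by simp
    then show ?thesis by (rule subgroup.rcos_module_imp[OF H(1) is_group ray_carrier[OF r]])
  qed
  then have "{n. H #> r n = H #> r n0} \<subseteq> {n. r n \<otimes> inv (r n0) \<in> H}" by blast
  then have "infinite {n. r n \<otimes> inv (r n0) \<in> H}" using n0 finite_subset by blast
  then show ?thesis using that[OF ray_carrier[OF r]] by blast
qed

lemma infinite_component_Int_subgroup: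
  assumes H: "subgroup H G" "finite (rcosets H)" and r: "cayley_ray G S r" and K: "finite K"
  shows "\<exists>n\<ge>m. infinite ({y. conn K (r n) y} \<inter> H)"
proof -
  obtain t where t: "t \<in> carrier G" "infinite {n. r n \<otimes> inv t \<in> H}"
    using ray_infinitely_often_in_coset[OF H r] by blast
  let ?E = "{u \<in> carrier G. \<not> conn K u (u \<otimes> inv t)}"
  have E: "finite ?E" using finite_not_conn_right_mult[OF K] t(1) by simp
  obtain m0 where m0: "\<forall>n\<ge>m0. r n \<notin> K \<and> conn K (r m0) (r n)"
    using ray_tail[OF r K] by blast
  define n0 where "n0 = max m m0"
  let ?N = "{n. r n \<otimes> inv t \<in> H} - {n. r n \<in> ?E} - {..<n0}"
  let ?p = "\<lambda>n. r n \<otimes> inv t"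
  have "infinite ?N"
    using t(2) finite_ray_preimage[OF r E] by (intro Diff_infinite_finite) auto
  moreover have "inj ?p"
  proof (rule injI)
    fix n n' assume "?p n = ?p n'"
    then have "r n = r n'" using ray_carrier[OF r] t(1) by simp
    then show "n = n'" using r unfolding cayley_ray_def inj_def by blast
  qed
  ultimately have "infinite (?p ` ?N)"
    using finite_imageD inj_on_subset[OF _ subset_UNIV] by blast
  moreover have "?p ` ?N \<subseteq> {y. conn K (r n0) y} \<inter> H"
  proof (rule image_subsetI)
    fix n assume n: "n \<in> ?N"
    have "conn K (r m0) (r n0)" "conn K (r m0) (r n)" using m0 n unfolding n0_def by auto
    then have "conn K (r n0) (r n)" using conn_sym conn_trans by blast
    moreover have "conn K (r n) (?p n)" using n ray_carrier[OF r] by auto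
    ultimately show "?p n \<in> {y. conn K (r n0) y} \<inter> H" using n conn_trans by blast
  qed
  ultimately have "infinite ({y. conn K (r n0) y} \<inter> H)" using finite_subset by blast
  moreover have "n0 \<ge> m" unfolding n0_def by simp
  ultimately show ?thesis by blast
qed

text \<open>Right multiplication by \<open>w\<close> keeps all but finitely many of the infinitely many points
  \<open>x\<close> in their component, and on them it agrees with left multiplication by \<open>c\<close>.\<close>
lemma conn_left_mult_if_twisted:
  assumes K: "finite K" and w: "w \<in> carrier G" and U: "infinite U"
    and twisted: "\<And>x. x \<in> U \<Longrightarrow> conn K v x \<and> c \<otimes> x = x \<otimes> w"
  shows "\<exists>u. conn K v u \<and> conn K u (c \<otimes> u)"
proof -
  have "infinite (U - {u \<in> carrier G. \<not> conn K u (u \<otimes> w)})"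
    using U finite_not_conn_right_mult[OF K w] by (rule Diff_infinite_finite[rotated])
  then obtain x where x: "x \<in> U" "x \<notin> {u \<in> carrier G. \<not> conn K u (u \<otimes> w)}"
    using infinite_imp_nonempty by blast
  have "x \<in> carrier G" using twisted[OF x(1)] conn_carrier by blast
  then have "conn K x (x \<otimes> w)" using x(2) by blast
  then show ?thesis using twisted[OF x(1)] by auto
qed

lemma deep_translation_connected_if_centralises:
  assumes H: "subgroup H G" "finite (rcosets H)" and c: "c \<in> carrier G"
    and comm: "\<And>h. h \<in> H \<Longrightarrow> c \<otimes> h = h \<otimes> c"
  shows "deep_translation_connected c"
  unfolding deep_translation_connected_def
proof (intro allI impI)
  fix K :: "'a set" and r m assume K: "finite K" and r: "cayley_ray G S r"
  obtain n where n: "n \<ge> m" "infinite ({y. conn K (r n) y} \<inter> H)"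
    using infinite_component_Int_subgroup[OF H r K] by blast
  have "conn K (r n) x \<and> c \<otimes> x = x \<otimes> c" if "x \<in> {y. conn K (r n) y} \<inter> H" for x
    using that comm by blast
  then obtain u where "conn K (r n) u" "conn K u (c \<otimes> u)"
    using conn_left_mult_if_twisted[OF K c n(2)] by blast
  then show "\<exists>n\<ge>m. \<exists>u. conn K (r n) u \<and> conn K u (c \<otimes> u)" using n(1) by blast
qed

lemma conn_right_mult_generate:
  assumes K: "finite K" and B: "subgroup B G" and \<Sigma>: "finite \<Sigma>" "\<Sigma> \<subseteq> B"
  obtains D where "finite D"
    and "\<And>a b w. a \<in> carrier G \<Longrightarrow> (a <# B) \<inter> D = {} \<Longrightarrow> b \<in> B \<Longrightarrow> w \<in> generate G \<Sigma> \<Longrightarrow>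
           conn K (a \<otimes> b) (a \<otimes> b \<otimes> w)"
proof -
  interpret B: subgroup B G by fact
  let ?E = "\<lambda>w. {u \<in> carrier G. \<not> conn K u (u \<otimes> w)}"
  let ?D = "K \<union> (\<Union>\<sigma>\<in>\<Sigma>. ?E \<sigma> \<union> ?E (inv \<sigma>))"
  have E: "finite (?E w)" if "w \<in> carrier G" for w using finite_not_conn_right_mult[OF K that] .
  have "finite ?D"
    using K \<Sigma> E by (intro finite_UnI finite_UN_I) (auto dest: subsetD)
  moreover have "conn K (a \<otimes> b) (a \<otimes> b \<otimes> w)"
    if a: "a \<in> carrier G" "(a <# B) \<inter> ?D = {}" and b: "b \<in> B" and w: "w \<in> generate G \<Sigma>"
    for a b w
  proof -
    have notin: "a \<otimes> b \<notin> ?D" if "b \<in> B" for b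
      using a(2) l_coset_memI[OF that] by blast
    show ?thesis
      using w b
    proof (induction arbitrary: b rule: generate.induct)
      case one
      have "a \<otimes> b \<notin> K" using notin[OF one] by blast
      then show ?case using a(1) one by (simp add: conn_refl)
    next
      case (incl \<sigma>)
      have "a \<otimes> b \<notin> ?E \<sigma>" using notin[OF incl.prems] incl.hyps by blast
      then show ?case using a(1) incl.prems by simp
    next
      case (inv \<sigma>)
      have "a \<otimes> b \<notin> ?E (inv \<sigma>)" using notin[OF inv.prems] inv.hyps by blast
      then show ?case using a(1) inv.prems by simp
    next
      case (eng w1 w2)
      have w: "w1 \<in> B" "w2 \<in> B"
        using eng.hyps generate_subgroup_incl[OF \<Sigma>(2) B] by auto
      have "conn K (a \<otimes> (b \<otimes> w1)) (a \<otimes> (b \<otimes> w1) \<otimes> w2)"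
        using eng.IH(2) eng.prems w by simp
      then have "conn K (a \<otimes> b \<otimes> w1) (a \<otimes> b \<otimes> (w1 \<otimes> w2))"
        using a(1) eng.prems w by (simp add: m_assoc)
      then show ?case using conn_trans eng.IH(1)[OF eng.prems] by blast
    qed
  qed
  ultimately show ?thesis by (rule that)
qed

text \<open>Either the left factors of the points \<open>a b\<close> of the component lie in a finite
  exceptional set, and a pigeonhole argument applies, or some \<open>a\<close> lies outside it, and then the
  whole infinite set \<open>a b \<langle>\<Sigma>\<rangle>\<close> stays in the component.\<close>
lemma infinite_component_Int_l_coset:
  assumes A: "subgroup A G" and B: "subgroup B G" and AB: "finite (A \<inter> B)"
    and \<Sigma>: "finite \<Sigma>" "\<Sigma> \<subseteq> B" "infinite (generate G \<Sigma>)"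
    and K: "finite K" and Y: "infinite ({y. conn K v y} \<inter> (A <#> B))"
  shows "\<exists>a\<in>A. infinite ({y. conn K v y} \<inter> (A <#> B) \<inter> (a <# B))"
proof -
  interpret A: subgroup A G by fact
  interpret B: subgroup B G by fact
  let ?Y = "{y. conn K v y} \<inter> (A <#> B)"
  obtain D where D: "finite D"
    "\<And>a b w. a \<in> carrier G \<Longrightarrow> (a <# B) \<inter> D = {} \<Longrightarrow> b \<in> B \<Longrightarrow> w \<in> generate G \<Sigma> \<Longrightarrow>
       conn K (a \<otimes> b) (a \<otimes> b \<otimes> w)"
    using conn_right_mult_generate[OF K B \<Sigma>(1,2)] by blast
  have gen: "generate G \<Sigma> \<subseteq> B" using generate_subgroup_incl[OF \<Sigma>(2) B] .
  have "infinite (?Y \<inter> (a <# B))"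
    if ab: "a \<in> A" "a \<notin> {a \<in> A. \<exists>b\<in>B. a \<otimes> b \<in> D}" "b \<in> B" "a \<otimes> b \<in> ?Y" for a b
  proof -
    have c: "a \<in> carrier G" "b \<in> carrier G" using ab by auto
    have disjoint: "(a <# B) \<inter> D = {}" using ab(1,2) unfolding l_coset_def by blast
    have "(\<lambda>w. a \<otimes> b \<otimes> w) ` generate G \<Sigma> \<subseteq> ?Y \<inter> (a <# B)"
    proof (rule image_subsetI)
      fix w assume w: "w \<in> generate G \<Sigma>"
      have wB: "w \<in> B" "b \<otimes> w \<in> B" using w gen ab(3) by auto
      have "conn K v (a \<otimes> b \<otimes> w)" using ab(4) D(2)[OF c(1) disjoint ab(3) w] conn_trans by blast
      moreover have "a \<otimes> b \<otimes> w = a \<otimes> (b \<otimes> w)" using c wB by (simp add: m_assoc)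
      ultimately show "a \<otimes> b \<otimes> w \<in> ?Y \<inter> (a <# B)"
        using set_mult_memI[OF ab(1) wB(2)] l_coset_memI[OF wB(2)] by simp
    qed
    moreover have "inj_on (\<lambda>w. a \<otimes> b \<otimes> w) (generate G \<Sigma>)"
    proof (rule inj_onI)
      fix x y assume xy: "x \<in> generate G \<Sigma>" "y \<in> generate G \<Sigma>" "a \<otimes> b \<otimes> x = a \<otimes> b \<otimes> y"
      have "x \<in> carrier G" "y \<in> carrier G" using xy(1,2) gen by auto
      then show "x = y" using xy(3) c by simp
    qed
    ultimately show ?thesis using \<Sigma>(3) by (metis finite_imageD finite_subset)
  qed
  moreover have "finite {a \<in> A. \<exists>b\<in>B. a \<otimes> b \<in> D}" using finite_left_factors[OF A B AB D(1)] .
  ultimately show ?thesis by (intro infinite_Int_l_coset[OF Y Int_lower2])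
qed

lemma deep_translation_connected_commuting_factor:
  assumes A: "subgroup A G" and B: "subgroup B G"
    and comm: "\<And>a b. a \<in> A \<Longrightarrow> b \<in> B \<Longrightarrow> a \<otimes> b = b \<otimes> a" and AB: "finite (A \<inter> B)"
    and H: "subgroup H G" "finite (rcosets H)" "H \<subseteq> A <#> B"
    and \<Sigma>: "finite \<Sigma>" "\<Sigma> \<subseteq> B" "infinite (generate G \<Sigma>)"
    and c: "c \<in> A"
  shows "deep_translation_connected c"
  unfolding deep_translation_connected_def
proof (intro allI impI)
  interpret A: subgroup A G by fact
  fix K :: "'a set" and r m assume K: "finite K" and r: "cayley_ray G S r"
  obtain n where n: "n \<ge> m" "infinite ({y. conn K (r n) y} \<inter> H)"
    using infinite_component_Int_subgroup[OF H(1,2) r K] by blast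
  then have "infinite ({y. conn K (r n) y} \<inter> (A <#> B))"
    using H(3) by (meson Int_mono finite_subset order_refl)
  then obtain a where a: "a \<in> A" "infinite ({y. conn K (r n) y} \<inter> (A <#> B) \<inter> (a <# B))"
    using infinite_component_Int_l_coset[OF A B AB \<Sigma> K] by blast
  let ?w = "inv a \<otimes> c \<otimes> a"
  have w: "?w \<in> A" using a(1) c by simp
  then have wc: "?w \<in> carrier G" by simp
  have "conn K (r n) x \<and> c \<otimes> x = x \<otimes> ?w"
    if x: "x \<in> {y. conn K (r n) y} \<inter> (A <#> B) \<inter> (a <# B)" for x
  proof -
    obtain b where b: "b \<in> B" "x = a \<otimes> b" using x unfolding l_coset_def by blast
    have cs: "a \<in> carrier G" "b \<in> carrier G" "c \<in> carrier G" using a(1) b(1) c B by (auto dest: subgroup.mem_carrier)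
    have "x \<otimes> ?w = a \<otimes> (b \<otimes> ?w)" using b(2) cs by (simp add: m_assoc)
    also have "\<dots> = a \<otimes> (?w \<otimes> b)" using comm[OF w b(1)] by simp
    also have "\<dots> = c \<otimes> x" using b(2) cs by (simp add: m_assoc[symmetric])
    finally show ?thesis using x by simp
  qed
  then obtain u where "conn K (r n) u" "conn K u (c \<otimes> u)"
    using conn_left_mult_if_twisted[OF K wc a(2)] by blast
  then show "\<exists>n\<ge>m. \<exists>u. conn K (r n) u \<and> conn K u (c \<otimes> u)" using n(1) by blast
qed

lemma infinite_carrier_if_ray:
  assumes "cayley_ray G S r"
  shows "infinite (carrier G)"
proof -
  have "inj r" using assms unfolding cayley_ray_def by blast
  moreover have "range r \<subseteq> carrier G" using ray_carrier[OF assms] by blast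
  ultimately show ?thesis using infinite_iff_countable_subset by blast
qed

lemma finite_ends_if_commuting_infinite_factors:
  assumes S: "finite S"
    and A: "subgroup A G" and B: "subgroup B G"
    and comm: "\<And>a b. a \<in> A \<Longrightarrow> b \<in> B \<Longrightarrow> a \<otimes> b = b \<otimes> a"
    and H: "subgroup H G" "finite (rcosets H)" "H \<subseteq> A <#> B" "A \<subseteq> H"
    and infinite: "infinite A" "infinite B"
  shows "finite (cayley_ends G S)"
proof (cases "finite (A \<inter> B)")
  case False
  have "deep_translation_connected c" if c: "c \<in> A \<inter> B" for c
  proof (rule deep_translation_connected_if_centralises[OF H(1,2)])
    show "c \<in> carrier G" using c subgroup.mem_carrier[OF A] by blast
    show "c \<otimes> h = h \<otimes> c" if "h \<in> H" for h
      using Int_commuting_subgroups_centralise[OF A B comm c] that H(3) by blast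
  qed
  moreover have "A \<inter> B \<subseteq> carrier G" using subgroup.subset[OF A] by blast
  ultimately show ?thesis using finite_ends_if_deep_translations[OF _ False] by blast
next
  case True
  consider (in_A) \<Sigma> where "finite \<Sigma>" "\<Sigma> \<subseteq> A" "infinite (generate G \<Sigma>)"
    | (in_B) \<Sigma> where "finite \<Sigma>" "\<Sigma> \<subseteq> B" "infinite (generate G \<Sigma>)"
    by (rule commuting_factor_infinite_finitely_generated[OF S generators_closed generate_eq A B comm
          H infinite(1)])
  then show ?thesis
  proof cases
    case (in_A \<Sigma>)
    have "H \<subseteq> B <#> A" using H(3) set_mult_commuting_subset[OF comm] by blast
    moreover have "finite (B \<inter> A)" using True by (simp add: Int_commute)
    moreover have "b \<otimes> a = a \<otimes> b" if "b \<in> B" "a \<in> A" for a b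
      using comm[OF that(2,1)] by simp
    ultimately have "deep_translation_connected c" if "c \<in> B" for c
      using deep_translation_connected_commuting_factor[OF B A _ _ H(1,2) _ in_A that] by blast
    then show ?thesis
      using finite_ends_if_deep_translations[OF subgroup.subset[OF B] infinite(2)] by blast
  next
    case (in_B \<Sigma>)
    have "deep_translation_connected c" if "c \<in> A" for c
      using deep_translation_connected_commuting_factor[OF A B comm True H(1-3) in_B that] .
    then show ?thesis
      using finite_ends_if_deep_translations[OF subgroup.subset[OF A] infinite(1)] by blast
  qed
qed

end

lemma DirProd_hom_split:
  fixes G (structure)
  assumes "group H1" "group H2" "group G" and \<phi>: "\<phi> \<in> hom (H1 \<times>\<times> H2) G"
    and h: "h1 \<in> carrier H1" "h2 \<in> carrier H2"
  shows "\<phi> (h1, h2) = \<phi> (h1, \<one>\<^bsub>H2\<^esub>) \<otimes> \<phi> (\<one>\<^bsub>H1\<^esub>, h2)"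
    and "\<phi> (h1, h2) = \<phi> (\<one>\<^bsub>H1\<^esub>, h2) \<otimes> \<phi> (h1, \<one>\<^bsub>H2\<^esub>)"
proof -
  interpret H1: group H1 by fact
  interpret H2: group H2 by fact
  have hom: "group_hom (H1 \<times>\<times> H2) G \<phi>"
    unfolding group_hom_def group_hom_axioms_def using DirProd_group assms(1-3) \<phi> by blast
  have c: "(h1, \<one>\<^bsub>H2\<^esub>) \<in> carrier (H1 \<times>\<times> H2)" "(\<one>\<^bsub>H1\<^esub>, h2) \<in> carrier (H1 \<times>\<times> H2)"
    using h by simp_all
  have e: "(h1, \<one>\<^bsub>H2\<^esub>) \<otimes>\<^bsub>H1 \<times>\<times> H2\<^esub> (\<one>\<^bsub>H1\<^esub>, h2) = (h1, h2)"
    "(\<one>\<^bsub>H1\<^esub>, h2) \<otimes>\<^bsub>H1 \<times>\<times> H2\<^esub> (h1, \<one>\<^bsub>H2\<^esub>) = (h1, h2)"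
    using h by simp_all
  show "\<phi> (h1, h2) = \<phi> (h1, \<one>\<^bsub>H2\<^esub>) \<otimes> \<phi> (\<one>\<^bsub>H1\<^esub>, h2)"
    using group_hom.hom_mult[OF hom c] unfolding e(1) .
  show "\<phi> (h1, h2) = \<phi> (\<one>\<^bsub>H1\<^esub>, h2) \<otimes> \<phi> (h1, \<one>\<^bsub>H2\<^esub>)"
    using group_hom.hom_mult[OF hom c(2,1)] unfolding e(2) .
qed

lemma DirProd_hom_factor_images:
  fixes G (structure)
  assumes H1: "group H1" and H2: "group H2" and G: "group G"
    and \<phi>: "\<phi> \<in> hom (H1 \<times>\<times> H2) G"
  defines "A \<equiv> \<phi> ` (carrier H1 \<times> {\<one>\<^bsub>H2\<^esub>})" and "B \<equiv> \<phi> ` ({\<one>\<^bsub>H1\<^esub>} \<times> carrier H2)"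
    and "H \<equiv> \<phi> ` carrier (H1 \<times>\<times> H2)"
  shows "subgroup A G" "subgroup B G" "\<And>a b. a \<in> A \<Longrightarrow> b \<in> B \<Longrightarrow> a \<otimes> b = b \<otimes> a"
    and "subgroup H G" "H \<subseteq> A <#> B" "A \<subseteq> H"
proof -
  interpret H1: group H1 by fact
  interpret H2: group H2 by fact
  have hom: "group_hom (H1 \<times>\<times> H2) G \<phi>"
    unfolding group_hom_def group_hom_axioms_def using DirProd_group[OF H1 H2] G \<phi> by blast
  show "subgroup A G" unfolding A_def
    using group_hom.subgroup_img_is_subgroup[OF hom DirProd_subgroups[OF H1 H1.subgroup_self H2 H2.triv_subgroup]] .
  show "subgroup B G" unfolding B_def
    using group_hom.subgroup_img_is_subgroup[OF hom DirProd_subgroups[OF H1 H1.triv_subgroup H2 H2.subgroup_self]] .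
  show "subgroup H G" unfolding H_def using group_hom.img_is_subgroup[OF hom] .
  note split = DirProd_hom_split[OF H1 H2 G \<phi>]
  show "a \<otimes> b = b \<otimes> a" if ab_in: "a \<in> A" "b \<in> B" for a b
  proof -
    obtain h1 where h1: "h1 \<in> carrier H1" "a = \<phi> (h1, \<one>\<^bsub>H2\<^esub>)"
      using ab_in(1) unfolding A_def by (auto elim!: imageE)
    obtain h2 where h2: "h2 \<in> carrier H2" "b = \<phi> (\<one>\<^bsub>H1\<^esub>, h2)"
      using ab_in(2) unfolding B_def by (auto elim!: imageE)
    note h = h1(1) h2(1) and ab = h1(2) h2(2)
    show ?thesis unfolding ab using trans[OF split(1)[OF h, symmetric] split(2)[OF h]] .
  qed
  show "H \<subseteq> A <#> B"
  proof
    fix x assume "x \<in> H"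
    then obtain h1 h2 where h: "h1 \<in> carrier H1" "h2 \<in> carrier H2" "x = \<phi> (h1, h2)"
      unfolding H_def by auto
    have "\<phi> (h1, \<one>\<^bsub>H2\<^esub>) \<in> A" "\<phi> (\<one>\<^bsub>H1\<^esub>, h2) \<in> B" unfolding A_def B_def using h by auto
    from group.set_mult_memI[OF G this] show "x \<in> A <#> B" using split(1)[OF h(1,2)] h(3) by simp
  qed
  show "A \<subseteq> H" unfolding A_def H_def by auto
qed

theorem proposition9p1:
  fixes G :: "('a, 'm) monoid_scheme"
    and H1 :: "('b, 'n) monoid_scheme" and H2 :: "('c, 'k) monoid_scheme"
  assumes "fin_gen_group G"
    and "infinitely_many_ends G"
    and "group H1" and "group H2"
  shows "infinite (carrier G) \<and> no_product_presentation G H1 H2"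
proof -
  obtain S where S: "finite S" "S \<subseteq> carrier G" "generate G S = carrier G"
    and ends: "infinite (cayley_ends G S)"
    using assms(2) unfolding infinitely_many_ends_def by blast
  interpret cayley_graph G S
    using assms(1) S unfolding fin_gen_group_def cayley_graph_def cayley_graph_axioms_def by blast
  obtain r where "cayley_ray G S r"
    using infinite_imp_nonempty[OF ends] unfolding cayley_ends_def by (auto elim!: quotientE)
  then have "infinite (carrier G)" by (rule infinite_carrier_if_ray)
  moreover have "no_product_presentation G H1 H2"
    unfolding no_product_presentation_def
  proof (intro ballI impI)
    fix \<phi> assume \<phi>: "\<phi> \<in> hom (H1 \<times>\<times> H2) G"
      and fin: "finite (rcosets\<^bsub>G\<^esub> (\<phi> ` carrier (H1 \<times>\<times> H2)))"
    note factors = DirProd_hom_factor_images[OF assms(3,4) is_group \<phi>]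
    show "finite (\<phi> ` (carrier H1 \<times> {\<one>\<^bsub>H2\<^esub>})) \<or> finite (\<phi> ` ({\<one>\<^bsub>H1\<^esub>} \<times> carrier H2))"
      using finite_ends_if_commuting_infinite_factors[OF S(1) factors(1-4) fin
          factors(5,6)] ends by blast
  qed
  ultimately show ?thesis ..
qed

end
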